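(* Let $K$ be an admissible kernel on $X\times Y$ with constant $C_K$. Then $U_K^{m_Y}(x)=C_K$ for every $x\in X$.
   Context: $(X,d_X)$ and $(Y,d_Y)$ are compact metric spaces and $G$ is a compact topological group acting isometrically and transitively on both $X$ and $Y$. $m_X$ and $m_Y$ denote the unique $G$-invariant Radon (Borel) probability measures on $X$ and $Y$. A Borel measurable $K:X\times Y\to\mathbb{R}\cup\{-\infty\}$ is an admissible kernel if: (i) there is $B_K\in[0,\infty)$ with $-\infty\le K(x,y)\le B_K$ for all $x,y$; (ii) $\int_X|K(x,y)|\,dm_X(x)<\infty$ for every $y\in Y$; (iii) for every $y$, $K(\cdot,y)$ is upper semi-continuous; (iv) $K(g(x),y)=K(x,g^{-1}(y))$ for all $g\in G,x\in X,y\in Y$. The constant $C_K$ is the common value of $\int_X K(x,y)\,dm_X(x)$, which does not depend on $y\in Y$. For a Borel probability measure $\mu$ on $Y$, $U_K^\mu(x)=\int_Y K(x,y)\,d\mu(y)$. *)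

theory Defs
  imports "HOL-Analysis.Analysis" "HOL-Probability.Probability"
begin

definition cont_isometric_transitive_action ::
  "('g::topological_group_add \<Rightarrow> 'a::metric_space \<Rightarrow> 'a) \<Rightarrow> 'a set \<Rightarrow> bool" where
  "cont_isometric_transitive_action act S \<longleftrightarrow>
     (\<forall>g. \<forall>x\<in>S. act g x \<in> S) \<and>
     (\<forall>x\<in>S. act 0 x = x) \<and>
     (\<forall>g h. \<forall>x\<in>S. act (g + h) x = act g (act h x)) \<and>
     continuous_on (UNIV \<times> S) (\<lambda>(g, x). act g x) \<and>
     (\<forall>g. \<forall>x\<in>S. \<forall>x'\<in>S. dist (act g x) (act g x') = dist x x') \<and>
     (\<forall>x\<in>S. \<forall>x'\<in>S. \<exists>g. act g x = x')"

definition invariant_borel_prob ::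
  "('g \<Rightarrow> 'a::metric_space \<Rightarrow> 'a) \<Rightarrow> 'a set \<Rightarrow> 'a measure \<Rightarrow> bool" where
  "invariant_borel_prob act S m \<longleftrightarrow>
     prob_space m \<and> space m = S \<and> sets m = sets (restrict_space borel S) \<and>
     (\<forall>g. \<forall>A\<in>sets m. emeasure m (act g -` A \<inter> S) = emeasure m A)"

definition usc_on :: "'a::topological_space set \<Rightarrow> ('a \<Rightarrow> ereal) \<Rightarrow> bool" where
  "usc_on S f \<longleftrightarrow> (\<forall>c. openin (top_of_set S) {x\<in>S. f x < c})"

definition ereal_integral :: "'a measure \<Rightarrow> ('a \<Rightarrow> ereal) \<Rightarrow> ereal" where
  "ereal_integral M f =
     enn2ereal (\<integral>\<^sup>+ x. e2ennreal (f x) \<partial>M) - enn2ereal (\<integral>\<^sup>+ x. e2ennreal (- f x) \<partial>M)"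

text \<open>Admissible kernel K on X \<times> Y (values in \<real> \<union> {-\<infinity>}, encoded as ereal \<noteq> \<infinity>).\<close>
definition admissible_kernel ::
  "('g::topological_group_add \<Rightarrow> 'a::metric_space \<Rightarrow> 'a) \<Rightarrow> ('g \<Rightarrow> 'b::metric_space \<Rightarrow> 'b)
   \<Rightarrow> 'a set \<Rightarrow> 'b set \<Rightarrow> 'a measure \<Rightarrow> ('a \<Rightarrow> 'b \<Rightarrow> ereal) \<Rightarrow> bool" where
  "admissible_kernel actX actY X Y mX K \<longleftrightarrow>
     (\<lambda>(x, y). K x y) \<in> borel_measurable (restrict_space borel (X \<times> Y)) \<and>
     (\<exists>B::real. 0 \<le> B \<and> (\<forall>x\<in>X. \<forall>y\<in>Y. K x y \<le> ereal B)) \<and>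
     (\<forall>y\<in>Y. (\<integral>\<^sup>+ x. e2ennreal \<bar>K x y\<bar> \<partial>mX) < \<infinity>) \<and>
     (\<forall>y\<in>Y. usc_on X (\<lambda>x. K x y)) \<and>
     (\<forall>g. \<forall>x\<in>X. \<forall>y\<in>Y. K (actX g x) y = K x (actY (- g) y))"

end

theory Submission
  imports Defs
begin

text \<open>For each of h = positive part and h = negative part, Fubini gives
  \<open>\<integral>\<^sub>Y \<integral>\<^sub>X h(K x y) dm\<^sub>X dm\<^sub>Y = \<integral>\<^sub>X \<integral>\<^sub>Y h(K x y) dm\<^sub>Y dm\<^sub>X\<close>, and the inner integral on the right
  does not depend on x: move x to x' by some g, use \<open>K (g x) y = K x (g\<^sup>-\<^sup>1 y)\<close> and the
  G-invariance of \<open>m\<^sub>Y\<close>. Hence it equals \<open>\<integral>\<^sub>Y h(K x\<^sub>0 y) dm\<^sub>Y\<close>. The left side is an average of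
  the constant \<open>C\<^sub>K\<close>; the bound \<open>K \<le> B\<^sub>K\<close> keeps the positive parts finite, so the two
  identities can be subtracted.

  Compactness of X and Y is needed only for measurability: it makes them separable, so
  every relatively open subset of \<open>X \<times> Y\<close> is a countable union of measurable rectangles.\<close>

lemma compact_obtains_countable_dense:
  fixes X :: "'a::metric_space set"
  assumes "compact X"
  obtains D where "countable D" "D \<subseteq> X" "\<And>x e. x \<in> X \<Longrightarrow> e > 0 \<Longrightarrow> \<exists>a\<in>D. dist a x < e"
proof -
  have "\<exists>T. finite T \<and> T \<subseteq> X \<and> X \<subseteq> (\<Union>a\<in>T. ball a (inverse (Suc n)))" for n :: nat
  proof -
    have "X \<subseteq> (\<Union>a\<in>X. ball a (inverse (Suc n)))" by auto
    then show ?thesis using compactE_image[OF assms, of X] by (metis open_ball)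
  qed
  then obtain T where T: "\<And>n. finite (T n)" "\<And>n. T n \<subseteq> X"
    "\<And>n. X \<subseteq> (\<Union>a\<in>T n. ball a (inverse (Suc n)))"
    by metis
  show ?thesis
  proof
    show "countable (\<Union>n. T n)" using T(1) by (simp add: countable_finite)
    show "(\<Union>n. T n) \<subseteq> X" using T(2) by blast
    fix x and e :: real assume "x \<in> X" "e > 0"
    then obtain n where n: "inverse (Suc n) < e" using reals_Archimedean by blast
    from T(3)[of n] \<open>x \<in> X\<close> obtain a where "a \<in> T n" "dist a x < inverse (Suc n)"
      by (auto simp: mem_ball)
    with n show "\<exists>a\<in>\<Union>n. T n. dist a x < e" by force
  qed
qed

lemma open_Int_Times_in_sets_pair_restrict_borel:
  fixes X :: "'a::metric_space set" and Y :: "'b::metric_space set"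
  assumes "compact X" "compact Y" "open W"
  shows "W \<inter> (X \<times> Y) \<in> sets (restrict_space borel X \<Otimes>\<^sub>M restrict_space borel Y)"
proof -
  obtain DX where DX: "countable DX" "\<And>x e. x \<in> X \<Longrightarrow> e > 0 \<Longrightarrow> \<exists>a\<in>DX. dist a x < e"
    using compact_obtains_countable_dense[OF assms(1)] by metis
  obtain DY where DY: "countable DY" "\<And>y e. y \<in> Y \<Longrightarrow> e > 0 \<Longrightarrow> \<exists>b\<in>DY. dist b y < e"
    using compact_obtains_countable_dense[OF assms(2)] by metis
  define I where "I = {(a, b, r). a \<in> DX \<and> b \<in> DY \<and> r \<in> range (\<lambda>n::nat. inverse (Suc n))
    \<and> ball a r \<times> ball b r \<subseteq> W}"
  define R where "R = (\<lambda>(a, b, r). (ball a r \<inter> X) \<times> (ball b r \<inter> Y))"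
  have "countable I"
  proof (rule countable_subset)
    show "I \<subseteq> DX \<times> DY \<times> range (\<lambda>n::nat. inverse (real (Suc n)))"
      unfolding I_def by auto
  qed (use DX(1) DY(1) in auto)
  moreover have "R i \<in> sets (restrict_space borel X \<Otimes>\<^sub>M restrict_space borel Y)" for i
    unfolding R_def
    by (auto simp: sets_restrict_space Int_commute intro!: pair_measureI image_eqI split: prod.split)
  moreover have "W \<inter> (X \<times> Y) = (\<Union>i\<in>I. R i)"
  proof
    show "(\<Union>i\<in>I. R i) \<subseteq> W \<inter> (X \<times> Y)"
      unfolding I_def R_def by auto
    show "W \<inter> (X \<times> Y) \<subseteq> (\<Union>i\<in>I. R i)"
    proof clarify
      fix x y assume xy: "(x, y) \<in> W" "x \<in> X" "y \<in> Y"
      obtain e where "e > 0" "ball (x, y) e \<subseteq> W"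
        using assms(3) xy(1) open_contains_ball by blast
      obtain n where n: "inverse (Suc n) < e / 4"
        using reals_Archimedean \<open>e > 0\<close> by (metis zero_less_divide_iff zero_less_numeral)
      define r :: real where "r = inverse (Suc n)"
      obtain a b where ab: "a \<in> DX" "dist a x < r" "b \<in> DY" "dist b y < r"
        using DX(2)[OF xy(2)] DY(2)[OF xy(3)] r_def
        by (metis inverse_positive_iff_positive of_nat_0_less_iff zero_less_Suc)
      have "ball a r \<times> ball b r \<subseteq> W"
      proof clarify
        fix u v assume "u \<in> ball a r" "v \<in> ball b r"
        then have "dist x u < 2 * r" "dist y v < 2 * r"
          using ab dist_triangle3[of x u a] dist_triangle3[of y v b] by auto
        then have "dist (x, y) (u, v) < e"
          using dist_Pair_Pair[of x y u v] sqrt_sum_squares_le_sum[of "dist x u" "dist y v"] n r_def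
          by simp
        then show "(u, v) \<in> W" using \<open>ball (x, y) e \<subseteq> W\<close> by auto
      qed
      then have "(a, b, r) \<in> I" unfolding I_def r_def using ab by auto
      moreover have "(x, y) \<in> R (a, b, r)" unfolding R_def using ab xy by (auto simp: dist_commute)
      ultimately show "(x, y) \<in> (\<Union>i\<in>I. R i)" by blast
    qed
  qed
  ultimately show ?thesis by (metis sets.countable_UN'')
qed

lemma measurable_pair_restrict_borel:
  fixes X :: "'a::metric_space set" and Y :: "'b::metric_space set"
  assumes "compact X" "compact Y"
    and sM: "sets M = sets (restrict_space borel X)" and sN: "sets N = sets (restrict_space borel Y)"
    and f: "f \<in> borel_measurable (restrict_space borel (X \<times> Y))"
  shows "f \<in> borel_measurable (M \<Otimes>\<^sub>M N)"
proof -
  have sp: "space (M \<Otimes>\<^sub>M N) = X \<times> Y"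
    using sets_eq_imp_space_eq[OF sM] sets_eq_imp_space_eq[OF sN]
    by (simp add: space_pair_measure space_restrict_space)
  have "(\<lambda>z. z) \<in> measurable (M \<Otimes>\<^sub>M N) (restrict_space borel (X \<times> Y))"
  proof (rule measurable_restrict_space2)
    show "(\<lambda>z. z) \<in> space (M \<Otimes>\<^sub>M N) \<rightarrow> X \<times> Y" by (simp add: sp)
    show "(\<lambda>z. z) \<in> borel_measurable (M \<Otimes>\<^sub>M N)"
    proof (rule borel_measurableI)
      fix W :: "('a \<times> 'b) set" assume "open W"
      then show "(\<lambda>z. z) -` W \<inter> space (M \<Otimes>\<^sub>M N) \<in> sets (M \<Otimes>\<^sub>M N)"
        using open_Int_Times_in_sets_pair_restrict_borel[OF assms(1,2)]
        by (simp add: sp sets_pair_measure_cong[OF sM sN])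
    qed
  qed
  from measurable_comp[OF this f] show ?thesis by (simp add: comp_def)
qed

lemma measurable_action:
  assumes A: "cont_isometric_transitive_action act S" and I: "invariant_borel_prob act S m"
  shows "act g \<in> measurable m m"
proof -
  have iso: "\<forall>x\<in>S. \<forall>x'\<in>S. dist (act g x) (act g x') = dist x x'"
    and into: "\<forall>x\<in>S. act g x \<in> S"
    using A unfolding cont_isometric_transitive_action_def by blast+
  have sm: "sets m = sets (restrict_space borel S)"
    using I unfolding invariant_borel_prob_def by blast
  have "continuous_on S (act g)"
    unfolding continuous_on_iff using iso by metis
  then have "act g \<in> measurable (restrict_space borel S) borel"
    by (rule borel_measurable_continuous_on_restrict)
  then have "act g \<in> measurable (restrict_space borel S) (restrict_space borel S)"
    by (rule measurable_restrict_space2[rotated]) (use into in \<open>auto simp: space_restrict_space\<close>)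
  then show ?thesis
    using measurable_cong_sets[OF sm sm] by blast
qed

lemma distr_action_eq:
  assumes A: "cont_isometric_transitive_action act S" and I: "invariant_borel_prob act S m"
  shows "distr m m (act g) = m"
proof (rule measure_eqI)
  show "sets (distr m m (act g)) = sets m" by simp
  fix B assume "B \<in> sets (distr m m (act g))"
  then have B: "B \<in> sets m" by simp
  have "space m = S" and "\<forall>g. \<forall>A\<in>sets m. emeasure m (act g -` A \<inter> S) = emeasure m A"
    using I unfolding invariant_borel_prob_def by blast+
  then show "emeasure (distr m m (act g)) B = emeasure m B"
    using emeasure_distr[OF measurable_action[OF A I] B] B by simp
qed

lemma nn_integral_equivariant_kernel_const:
  fixes F :: "'a::metric_space \<Rightarrow> 'b::metric_space \<Rightarrow> ennreal"
  assumes AX: "cont_isometric_transitive_action actX X"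
    and AY: "cont_isometric_transitive_action actY Y"
    and IY: "invariant_borel_prob actY Y mY"
    and eqv: "\<And>g x y. x \<in> X \<Longrightarrow> y \<in> Y \<Longrightarrow> F (actX g x) y = F x (actY (- g) y)"
    and F: "F x \<in> borel_measurable mY"
    and x: "x \<in> X" and x': "x' \<in> X"
  shows "(\<integral>\<^sup>+y. F x' y \<partial>mY) = (\<integral>\<^sup>+y. F x y \<partial>mY)"
proof -
  obtain g where g: "actX g x = x'"
    using AX x x' unfolding cont_isometric_transitive_action_def by blast
  have "space mY = Y" using IY unfolding invariant_borel_prob_def by blast
  then have "(\<integral>\<^sup>+y. F x' y \<partial>mY) = (\<integral>\<^sup>+y. F x (actY (- g) y) \<partial>mY)"
    using eqv x g by (intro nn_integral_cong) auto
  also have "\<dots> = (\<integral>\<^sup>+y. F x y \<partial>distr mY mY (actY (- g)))"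
    using F by (simp add: nn_integral_distr[OF measurable_action[OF AY IY]])
  also have "\<dots> = (\<integral>\<^sup>+y. F x y \<partial>mY)"
    by (simp add: distr_action_eq[OF AY IY])
  finally show ?thesis .
qed

lemma (in sigma_finite_measure) borel_measurable_nn_integral_swapped:
  assumes "(\<lambda>(x, y). f x y) \<in> borel_measurable (M \<Otimes>\<^sub>M N)"
  shows "(\<lambda>y. \<integral>\<^sup>+x. f x y \<partial>M) \<in> borel_measurable N"
proof -
  have "(\<lambda>(y, x). f x y) \<in> borel_measurable (N \<Otimes>\<^sub>M M)"
    using measurable_comp[OF measurable_pair_swap' assms] by (simp add: comp_def case_prod_beta)
  then show ?thesis by (rule borel_measurable_nn_integral)
qed

lemma nn_integral_average_equivariant_kernel:
  fixes F :: "'a::metric_space \<Rightarrow> 'b::metric_space \<Rightarrow> ennreal"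
  assumes AX: "cont_isometric_transitive_action actX X"
    and AY: "cont_isometric_transitive_action actY Y"
    and IX: "invariant_borel_prob actX X mX"
    and IY: "invariant_borel_prob actY Y mY"
    and eqv: "\<And>g x y. x \<in> X \<Longrightarrow> y \<in> Y \<Longrightarrow> F (actX g x) y = F x (actY (- g) y)"
    and F: "(\<lambda>(x, y). F x y) \<in> borel_measurable (mX \<Otimes>\<^sub>M mY)"
    and x0: "x0 \<in> X"
  shows "(\<integral>\<^sup>+y. (\<integral>\<^sup>+x. F x y \<partial>mX) \<partial>mY) = (\<integral>\<^sup>+y. F x0 y \<partial>mY)"
proof -
  interpret mX: prob_space mX using IX unfolding invariant_borel_prob_def by blast
  interpret mY: prob_space mY using IY unfolding invariant_borel_prob_def by blast
  interpret pair_sigma_finite mX mY by unfold_locales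
  have "space mX = X" using IX unfolding invariant_borel_prob_def by blast
  have "F x0 \<in> borel_measurable mY"
    using measurable_Pair2[OF F, of x0] x0 \<open>space mX = X\<close> by simp
  have "(\<integral>\<^sup>+y. (\<integral>\<^sup>+x. F x y \<partial>mX) \<partial>mY) = (\<integral>\<^sup>+x. (\<integral>\<^sup>+y. F x y \<partial>mY) \<partial>mX)"
    using Fubini[OF F] by simp
  also have "\<dots> = (\<integral>\<^sup>+x. (\<integral>\<^sup>+y. F x0 y \<partial>mY) \<partial>mX)"
  proof (rule nn_integral_cong)
    fix x assume "x \<in> space mX"
    with \<open>space mX = X\<close> show "(\<integral>\<^sup>+y. F x y \<partial>mY) = (\<integral>\<^sup>+y. F x0 y \<partial>mY)"
      using nn_integral_equivariant_kernel_const[OF AX AY IY eqv \<open>F x0 \<in> borel_measurable mY\<close> x0]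
      by simp
  qed
  also have "\<dots> = (\<integral>\<^sup>+y. F x0 y \<partial>mY)"
    by (simp add: mX.emeasure_space_1)
  finally show ?thesis .
qed

lemma (in prob_space) nn_integral_diff_eq_const:
  fixes p q :: "'a \<Rightarrow> ennreal"
  assumes p: "p \<in> borel_measurable M"
    and bounded: "\<And>y. y \<in> space M \<Longrightarrow> p y \<le> ennreal B"
    and diff: "\<And>y. y \<in> space M \<Longrightarrow> enn2ereal (p y) - enn2ereal (q y) = ereal c"
  shows "enn2ereal (\<integral>\<^sup>+y. p y \<partial>M) - enn2ereal (\<integral>\<^sup>+y. q y \<partial>M) = ereal c"
proof -
  define pr where "pr y = enn2real (p y)" for y
  define qr where "qr y = enn2real (q y)" for y
  have p_eq: "p y = ennreal (pr y)" and q_eq: "q y = ennreal (qr y)" and qr_eq: "qr y = pr y - c"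
    if y: "y \<in> space M" for y
  proof -
    have "p y \<noteq> \<top>" using bounded[OF y] by (metis ennreal_neq_top neq_top_trans)
    moreover have "q y \<noteq> \<top>"
      using diff[OF y] \<open>p y \<noteq> \<top>\<close> by (cases "enn2ereal (p y)") (auto simp: enn2ereal_top)
    ultimately show p_eq: "p y = ennreal (pr y)" and q_eq: "q y = ennreal (qr y)"
      unfolding pr_def qr_def by (simp_all add: ennreal_enn2real_if)
    have "ereal (pr y) - ereal (qr y) = ereal c"
      using diff[OF y] unfolding p_eq q_eq by (simp add: pr_def qr_def)
    then show "qr y = pr y - c" by simp
  qed
  have "integrable M pr"
    using p bounded unfolding pr_def
    by (intro integrable_const_bound[where B="max 0 B"] AE_I2) (auto intro!: enn2real_leI)
  then have "integrable M (\<lambda>y. pr y - c)" by simp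
  then have "integrable M qr"
    using Bochner_Integration.integrable_cong[of M M qr "\<lambda>y. pr y - c"] qr_eq by blast
  have "(\<integral>\<^sup>+y. p y \<partial>M) = (\<integral>\<^sup>+y. ennreal (pr y) \<partial>M)"
    by (rule nn_integral_cong) (simp add: p_eq)
  also have "\<dots> = ennreal (integral\<^sup>L M pr)"
    using \<open>integrable M pr\<close> by (rule nn_integral_eq_integral) (simp add: pr_def)
  finally have int_p: "(\<integral>\<^sup>+y. p y \<partial>M) = ennreal (integral\<^sup>L M pr)" .
  have "(\<integral>\<^sup>+y. q y \<partial>M) = (\<integral>\<^sup>+y. ennreal (qr y) \<partial>M)"
    by (rule nn_integral_cong) (simp add: q_eq)
  also have "\<dots> = ennreal (integral\<^sup>L M qr)"
    using \<open>integrable M qr\<close> by (rule nn_integral_eq_integral) (simp add: qr_def)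
  also have "integral\<^sup>L M qr = integral\<^sup>L M pr - c"
    using \<open>integrable M pr\<close> by (simp add: qr_eq prob_space cong: Bochner_Integration.integral_cong)
  finally have int_q: "(\<integral>\<^sup>+y. q y \<partial>M) = ennreal (integral\<^sup>L M pr - c)" .
  have "0 \<le> integral\<^sup>L M pr" "0 \<le> integral\<^sup>L M qr" by (simp_all add: pr_def qr_def)
  then show ?thesis
    unfolding int_p int_q using \<open>integral\<^sup>L M qr = integral\<^sup>L M pr - c\<close> by simp
qed

lemma ereal_integral_equivariant_kernel_const:
  fixes K :: "'a::metric_space \<Rightarrow> 'b::metric_space \<Rightarrow> ereal"
  assumes AX: "cont_isometric_transitive_action actX X"
    and AY: "cont_isometric_transitive_action actY Y"
    and IX: "invariant_borel_prob actX X mX"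
    and IY: "invariant_borel_prob actY Y mY"
    and K: "(\<lambda>(x, y). K x y) \<in> borel_measurable (mX \<Otimes>\<^sub>M mY)"
    and bounded: "\<And>x y. x \<in> X \<Longrightarrow> y \<in> Y \<Longrightarrow> K x y \<le> ereal B"
    and eqv: "\<And>g x y. x \<in> X \<Longrightarrow> y \<in> Y \<Longrightarrow> K (actX g x) y = K x (actY (- g) y)"
    and average_const: "\<And>y. y \<in> Y \<Longrightarrow> ereal_integral mX (\<lambda>x. K x y) = ereal c"
    and x0: "x0 \<in> X"
  shows "ereal_integral mY (\<lambda>y. K x0 y) = ereal c"
proof -
  interpret mX: prob_space mX using IX unfolding invariant_borel_prob_def by blast
  interpret mY: prob_space mY using IY unfolding invariant_borel_prob_def by blast
  have spX: "space mX = X" and spY: "space mY = Y"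
    using IX IY unfolding invariant_borel_prob_def by blast+
  have hK: "(\<lambda>(x, y). h (K x y)) \<in> borel_measurable (mX \<Otimes>\<^sub>M mY)"
    if "h \<in> borel_measurable borel" for h :: "ereal \<Rightarrow> ennreal"
    using measurable_comp[OF K that] by (simp add: comp_def case_prod_beta)
  have average: "(\<integral>\<^sup>+y. (\<integral>\<^sup>+x. h (K x y) \<partial>mX) \<partial>mY) = (\<integral>\<^sup>+y. h (K x0 y) \<partial>mY)"
    if "h \<in> borel_measurable borel" for h :: "ereal \<Rightarrow> ennreal"
    using eqv by (intro nn_integral_average_equivariant_kernel[OF AX AY IX IY _ hK[OF that] x0]) auto
  have pos: "e2ennreal \<in> borel_measurable borel" by measurable
  have neg: "(\<lambda>v::ereal. e2ennreal (- v)) \<in> borel_measurable borel" by measurable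
  have "enn2ereal (\<integral>\<^sup>+y. (\<integral>\<^sup>+x. e2ennreal (K x y) \<partial>mX) \<partial>mY)
      - enn2ereal (\<integral>\<^sup>+y. (\<integral>\<^sup>+x. e2ennreal (- K x y) \<partial>mX) \<partial>mY) = ereal c"
  proof (rule mY.nn_integral_diff_eq_const)
    show "(\<lambda>y. \<integral>\<^sup>+x. e2ennreal (K x y) \<partial>mX) \<in> borel_measurable mY"
      using mX.borel_measurable_nn_integral_swapped[OF hK[OF pos]] by simp
    fix y assume "y \<in> space mY"
    then have "(\<integral>\<^sup>+x. e2ennreal (K x y) \<partial>mX) \<le> (\<integral>\<^sup>+x. ennreal B \<partial>mX)"
      using bounded spX spY e2ennreal_mono by (intro nn_integral_mono) fastforce
    then show "(\<integral>\<^sup>+x. e2ennreal (K x y) \<partial>mX) \<le> ennreal B"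
      by (simp add: mX.emeasure_space_1)
    show "enn2ereal (\<integral>\<^sup>+x. e2ennreal (K x y) \<partial>mX) - enn2ereal (\<integral>\<^sup>+x. e2ennreal (- K x y) \<partial>mX)
        = ereal c"
      using average_const \<open>y \<in> space mY\<close> spY unfolding ereal_integral_def by simp
  qed
  then show ?thesis
    unfolding ereal_integral_def average[OF pos] average[OF neg] .
qed

theorem lemma4p5:
  fixes X :: "'a::metric_space set" and Y :: "'b::metric_space set"
    and actX :: "'g::{topological_group_add, t2_space} \<Rightarrow> 'a \<Rightarrow> 'a"
    and actY :: "'g \<Rightarrow> 'b \<Rightarrow> 'b"
    and mX :: "'a measure" and mY :: "'b measure"
    and K :: "'a \<Rightarrow> 'b \<Rightarrow> ereal" and C_K :: real
  assumes "compact X" "X \<noteq> {}" "compact Y" "Y \<noteq> {}"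
    and "compact (UNIV :: 'g set)"
    and "cont_isometric_transitive_action actX X"
    and "cont_isometric_transitive_action actY Y"
    and "invariant_borel_prob actX X mX"
    and "invariant_borel_prob actY Y mY"
    and "admissible_kernel actX actY X Y mX K"
    and "\<forall>y\<in>Y. ereal_integral mX (\<lambda>x. K x y) = ereal C_K"
  shows "\<forall>x\<in>X. ereal_integral mY (\<lambda>y. K x y) = ereal C_K"
proof
  fix x0 assume "x0 \<in> X"
  have "sets mX = sets (restrict_space borel X)" and "sets mY = sets (restrict_space borel Y)"
    using assms(8,9) unfolding invariant_borel_prob_def by blast+
  then have "(\<lambda>(x, y). K x y) \<in> borel_measurable (mX \<Otimes>\<^sub>M mY)"
    using assms(10) measurable_pair_restrict_borel[OF assms(1,3)]
    unfolding admissible_kernel_def by blast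
  moreover obtain B :: real where "\<And>x y. x \<in> X \<Longrightarrow> y \<in> Y \<Longrightarrow> K x y \<le> ereal B"
    using assms(10) unfolding admissible_kernel_def by blast
  moreover have "\<And>g x y. x \<in> X \<Longrightarrow> y \<in> Y \<Longrightarrow> K (actX g x) y = K x (actY (- g) y)"
    using assms(10) unfolding admissible_kernel_def by blast
  ultimately show "ereal_integral mY (\<lambda>y. K x0 y) = ereal C_K"
    using ereal_integral_equivariant_kernel_const[OF assms(6-9)] assms(11) \<open>x0 \<in> X\<close>
    by blast
qed

end
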